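(* Let $V \subset \mathbb{R}^2$ be a finite point set in general position and $m$ a positive integer. Then $\mathcal{H}(V,\mathcal{R}_{\rm NW},m)$ admits a $2$-shallow hitting set $X$ whose points $x_1,\ldots,x_n$ have decreasing $x$-coordinates and decreasing $y$-coordinates, and such that (i) $x_1$ is the leftmost point among the $m$ topmost points of $V$; (ii) the hyperedge consisting of the $m$ topmost points of $V$ contains exactly one point of $X$; (iii) for any two consecutive points $x_j, x_{j+1}$, the bottomless rectangle $B_j = \{(x,y) : x(x_{j+1}) \leq x \leq x(x_j),\ y \leq y(x_j)\}$ (top-right corner $x_j$, with $x_{j+1}$ on its left side) satisfies $|B_j \cap V| \geq m+1$; and (iv) for any three consecutive points $x_j,x_{j+1},x_{j+2}$, the axis-aligned rectangle $R_j$ with top-right corner $x_j$ and bottom-left corner $x_{j+2}$ satisfies $|R_j \cap V| \geq m+2$.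
   Context: $\mathcal{R}_{\rm NW} = \{\{(x,y) : x \leq a,\ y \geq b\} : a,b \in \mathbb{R}\}$ is the family of north-west quadrants. $\mathcal{H}(V,\mathcal{R},m)$ is the hypergraph on $V$ whose hyperedges are the sets $V \cap R$, $R \in \mathcal{R}$, of size exactly $m$. General position: pairwise distinct $x$-coordinates, $y$-coordinates and values $x+y$. For a point $p$, $x(p)$ and $y(p)$ are its coordinates. A set $X \subseteq V$ is a $t$-shallow hitting set of a hypergraph on $V$ if every hyperedge contains at least one and at most $t$ points of $X$. *)

theory Defs
  imports Complex_Main
begin

type_synonym pt = "real \<times> real"

definition nw_quad :: "real \<Rightarrow> real \<Rightarrow> pt set" where
  "nw_quad a b = {p. fst p \<le> a \<and> snd p \<ge> b}"

definition nw_hyperedges :: "pt set \<Rightarrow> nat \<Rightarrow> pt set set" where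
  "nw_hyperedges V m = {V \<inter> nw_quad a b | a b. card (V \<inter> nw_quad a b) = m}"

definition shallow_hitting_set :: "nat \<Rightarrow> pt set \<Rightarrow> pt set set \<Rightarrow> pt set \<Rightarrow> bool" where
  "shallow_hitting_set t V H X \<longleftrightarrow> X \<subseteq> V \<and>
     (\<forall>e\<in>H. 1 \<le> card (e \<inter> X) \<and> card (e \<inter> X) \<le> t)"

definition general_position :: "pt set \<Rightarrow> bool" where
  "general_position V \<longleftrightarrow> inj_on fst V \<and> inj_on snd V \<and> inj_on (\<lambda>p. fst p + snd p) V"

definition topmost :: "pt set \<Rightarrow> nat \<Rightarrow> pt set" where
  "topmost V m = {p \<in> V. card {q \<in> V. snd p < snd q} < m}"

definition bottomless :: "pt \<Rightarrow> pt \<Rightarrow> pt set" where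
  "bottomless p q = {z. fst q \<le> fst z \<and> fst z \<le> fst p \<and> snd z \<le> snd p}"

definition rect :: "pt \<Rightarrow> pt \<Rightarrow> pt set" where
  "rect p q = {z. fst q \<le> fst z \<and> fst z \<le> fst p \<and> snd q \<le> snd z \<and> snd z \<le> snd p}"

end

theory Submission
  imports Defs
begin

(*
  The points x_1, x_2, ... are chosen greedily from right to left: x_1 is the leftmost of the
  m topmost points of V, and x_(j+1) is the leftmost of the m topmost points strictly to the
  left of x_j, until fewer than m points remain there. Every point to the left of x_j lies below
  x_j, so the chain descends, and the m topmost points to the left of x_j together with x_j
  (resp. with x_j and x_(j+2)) lie in B_j (resp. R_j), which gives (iii) and (iv).
  If a hyperedge lies among the points from which x_j was chosen, misses x_j and is not entirely
  to the left of x_j, then all its points lie above x_j, and there are fewer than m of those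
  since x_j is one of the m topmost; so by induction every hyperedge meets the chain.
  No hyperedge contains both x_j and x_(j+2), since it would then contain R_j with m + 2 points,
  and as the chain is monotone, every hyperedge contains at most two of its points.
*)

abbreviation strictly_sw :: "pt \<Rightarrow> pt \<Rightarrow> bool" where
  "strictly_sw p q \<equiv> fst q < fst p \<and> snd q < snd p"

definition leftmost_in :: "pt set \<Rightarrow> pt \<Rightarrow> bool" where
  "leftmost_in A p \<longleftrightarrow> p \<in> A \<and> (\<forall>q\<in>A. fst p \<le> fst q)"

definition num_above :: "pt set \<Rightarrow> pt \<Rightarrow> nat" where
  "num_above S p = card {q \<in> S. snd p < snd q}"

definition left_of :: "pt set \<Rightarrow> pt \<Rightarrow> pt set" where
  "left_of V p = {q \<in> V. fst q < fst p}"

definition staircase :: "pt set \<Rightarrow> nat \<Rightarrow> pt list \<Rightarrow> bool" where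
  "staircase V m xs \<longleftrightarrow> sorted_wrt strictly_sw xs \<and>
     (\<forall>j. j + 1 < length xs \<longrightarrow> card (V \<inter> bottomless (xs ! j) (xs ! (j + 1))) \<ge> m + 1) \<and>
     (\<forall>j. j + 2 < length xs \<longrightarrow> card (V \<inter> rect (xs ! j) (xs ! (j + 2))) \<ge> m + 2)"

lemma ex_leftmost_in:
  assumes "finite A" "A \<noteq> {}"
  shows "\<exists>p. leftmost_in A p"
  using arg_min_if_finite(1)[OF assms] arg_min_least[OF assms] unfolding leftmost_in_def by blast

lemma topmost_num_above: "topmost S k = {p \<in> S. num_above S p < k}"
  by (simp add: topmost_def num_above_def)

lemma num_above_strict_antimono:
  assumes "finite S" "q \<in> S" "snd p < snd q"
  shows "num_above S q < num_above S p"
  unfolding num_above_def using assms by (intro psubset_card_mono) auto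

lemma num_above_less_card:
  assumes "finite S" "p \<in> S"
  shows "num_above S p < card S"
  unfolding num_above_def using assms by (intro psubset_card_mono) auto

lemma inj_on_num_above:
  assumes "finite S" "inj_on snd S"
  shows "inj_on (num_above S) S"
proof (rule inj_onI, rule ccontr)
  fix p q assume p: "p \<in> S" and q: "q \<in> S" and eq: "num_above S p = num_above S q" and "p \<noteq> q"
  then have "snd p < snd q \<or> snd q < snd p"
    using assms(2) by (meson inj_on_contraD linorder_neqE)
  then show False
    using num_above_strict_antimono[OF assms(1)] p q eq by (metis less_irrefl)
qed

lemma num_above_image:
  assumes "finite S" "inj_on snd S"
  shows "num_above S ` S = {..<card S}"
proof (rule card_subset_eq)
  show "num_above S ` S \<subseteq> {..<card S}"
    using num_above_less_card[OF assms(1)] by auto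
  show "card (num_above S ` S) = card {..<card S}"
    using card_image[OF inj_on_num_above[OF assms]] by simp
qed simp

lemma card_topmost:
  assumes "finite S" "inj_on snd S" "k \<le> card S"
  shows "card (topmost S k) = k"
proof -
  have "inj_on (num_above S) (topmost S k)"
    using inj_on_num_above[OF assms(1,2)] by (rule inj_on_subset) (auto simp: topmost_def)
  then have "card (topmost S k) = card (num_above S ` topmost S k)"
    by (simp add: card_image)
  also have "num_above S ` topmost S k = {n \<in> num_above S ` S. n < k}"
    unfolding topmost_num_above by blast
  also have "\<dots> = {..<k}"
    using assms(3) unfolding num_above_image[OF assms(1,2)] by auto
  finally show ?thesis by simp
qed

lemma topmost_above:
  assumes "finite S" "inj_on snd S" "t \<in> topmost S k" "s \<in> S" "s \<notin> topmost S k"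
  shows "snd s < snd t"
proof (rule ccontr)
  assume "\<not> snd s < snd t"
  moreover have "t \<in> S" "s \<noteq> t" using assms(3,5) by (auto simp: topmost_def)
  ultimately have "snd t < snd s"
    using assms(2,4) by (metis inj_on_contraD linorder_neqE)
  then have "num_above S s < num_above S t"
    using num_above_strict_antimono[OF assms(1,4)] by blast
  then show False
    using assms(3-5) unfolding topmost_num_above by simp
qed

lemma ex_leftmost_topmost:
  assumes "finite S" "inj_on snd S" "0 < k" "k \<le> card S"
  shows "\<exists>p. leftmost_in (topmost S k) p"
proof (rule ex_leftmost_in)
  show "finite (topmost S k)" using assms(1) by (simp add: topmost_def)
  show "topmost S k \<noteq> {}" using card_topmost[OF assms(1,2,4)] assms(3) by auto
qed

lemma below_leftmost_topmost:
  assumes "finite S" "inj_on snd S" "leftmost_in (topmost S k) p" "q \<in> S" "fst q < fst p"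
  shows "snd q < snd p"
proof -
  have "q \<notin> topmost S k" using assms(3,5) unfolding leftmost_in_def by force
  then show ?thesis
    using topmost_above assms(1-4) unfolding leftmost_in_def by blast
qed

lemma nw_hyperedge_hit_or_left:
  assumes "finite V" "L \<subseteq> V" "p \<in> topmost L m" "e \<in> nw_hyperedges V m" "e \<subseteq> L"
  shows "p \<in> e \<or> (\<forall>q\<in>e. fst q < fst p)"
proof (rule ccontr)
  assume "\<not> ?thesis"
  then obtain q where q: "q \<in> e" "fst p \<le> fst q" and "p \<notin> e" by force
  obtain a b where e: "e = V \<inter> nw_quad a b" and card_e: "card e = m"
    using assms(4) unfolding nw_hyperedges_def by blast
  have "p \<in> V" using assms(2,3) unfolding topmost_def by blast
  then have "snd p < b"
    using q \<open>p \<notin> e\<close> unfolding e nw_quad_def by auto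
  then have "e \<subseteq> {q \<in> L. snd p < snd q}"
    using assms(5) unfolding e nw_quad_def by auto
  then have "card e \<le> num_above L p"
    unfolding num_above_def using assms(1,2) by (intro card_mono) (auto intro: finite_subset)
  then show False using assms(3) card_e unfolding topmost_num_above by simp
qed

lemma staircase_Nil [simp]: "staircase V m []"
  by (simp add: staircase_def)

lemma staircase_Cons:
  "staircase V m (p # xs) \<longleftrightarrow>
     (\<forall>y\<in>set xs. strictly_sw p y) \<and>
     (xs \<noteq> [] \<longrightarrow> m + 1 \<le> card (V \<inter> bottomless p (hd xs))) \<and>
     (2 \<le> length xs \<longrightarrow> m + 2 \<le> card (V \<inter> rect p (xs ! 1))) \<and>
     staircase V m xs"
proof -
  have pairs: "(\<forall>j. j + 1 < length (p # xs) \<longrightarrow> P ((p # xs) ! j) ((p # xs) ! (j + 1))) \<longleftrightarrow>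
     (xs \<noteq> [] \<longrightarrow> P p (hd xs)) \<and> (\<forall>j. j + 1 < length xs \<longrightarrow> P (xs ! j) (xs ! (j + 1)))" for P
    by (auto simp: nth_Cons hd_conv_nth split: nat.split)
  have triples: "(\<forall>j. j + 2 < length (p # xs) \<longrightarrow> P ((p # xs) ! j) ((p # xs) ! (j + 2))) \<longleftrightarrow>
     (2 \<le> length xs \<longrightarrow> P p (xs ! 1)) \<and> (\<forall>j. j + 2 < length xs \<longrightarrow> P (xs ! j) (xs ! (j + 2)))" for P
    by (auto simp: nth_Cons split: nat.split)
  show ?thesis
    unfolding staircase_def sorted_wrt.simps
      pairs[of "\<lambda>a b. m + 1 \<le> card (V \<inter> bottomless a b)"]
      triples[of "\<lambda>a b. m + 2 \<le> card (V \<inter> rect a b)"]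
    by blast
qed

lemma staircase_nw_quad_at_most_two:
  assumes "finite V" "set xs \<subseteq> V" "staircase V m xs" "card (V \<inter> nw_quad a b) \<le> m"
  shows "card (set xs \<inter> nw_quad a b) \<le> 2"
  using assms(2,3)
proof (induction xs)
  case Nil
  then show ?case by simp
next
  case (Cons p ys)
  show ?case
  proof (cases "p \<in> nw_quad a b")
    case False
    then have "set (p # ys) \<inter> nw_quad a b = set ys \<inter> nw_quad a b" by auto
    with Cons show ?thesis by (simp add: staircase_Cons)
  next
    case True
    have "set (p # ys) \<inter> nw_quad a b \<subseteq> set (take 2 (p # ys))"
    proof
      fix y assume y: "y \<in> set (p # ys) \<inter> nw_quad a b"
      show "y \<in> set (take 2 (p # ys))"
      proof (rule ccontr)
        assume "y \<notin> set (take 2 (p # ys))"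
        with y obtain h z t where ys: "ys = h # z # t" and "y \<in> set (z # t)"
          by (cases ys rule: remdups_adj.cases) auto
        then have "strictly_sw p z" "snd y \<le> snd z"
          using Cons.prems(2) by (auto simp: staircase_Cons)
        then have "rect p z \<subseteq> nw_quad a b"
          using True y by (auto simp: rect_def nw_quad_def)
        then have "card (V \<inter> rect p z) \<le> m"
          using assms(1,4) by (meson Int_mono card_mono finite_Int order_refl order_trans)
        moreover have "m + 2 \<le> card (V \<inter> rect p z)"
          using Cons.prems(2) ys by (simp add: staircase_Cons)
        ultimately show False by simp
      qed
    qed
    then have "card (set (p # ys) \<inter> nw_quad a b) \<le> card (set (take 2 (p # ys)))"
      by (intro card_mono) auto
    also have "\<dots> \<le> 2"
      using card_length[of "take 2 (p # ys)"] by simp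
    finally show ?thesis .
  qed
qed

lemma staircase_shallow_hitting_set:
  assumes "finite V" "set xs \<subseteq> V" "staircase V m xs"
    and hits: "\<forall>e\<in>nw_hyperedges V m. e \<inter> set xs \<noteq> {}"
  shows "shallow_hitting_set 2 V (nw_hyperedges V m) (set xs)"
  unfolding shallow_hitting_set_def
proof (intro conjI ballI)
  fix e assume e: "e \<in> nw_hyperedges V m"
  then show "1 \<le> card (e \<inter> set xs)"
    using hits by (simp add: Suc_le_eq card_gt_0_iff)
  obtain a b where "e = V \<inter> nw_quad a b" "card (V \<inter> nw_quad a b) = m"
    using e unfolding nw_hyperedges_def by blast
  then show "card (e \<inter> set xs) \<le> 2"
    using staircase_nw_quad_at_most_two[OF assms(1-3)] assms(2)
    by (metis Int_absorb1 Int_assoc Int_commute order_refl)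
qed (fact assms(2))

lemma leftmost_topmost_left_of_bounds:
  assumes "\<forall>q\<in>left_of V p. snd q < snd p" "leftmost_in (topmost (left_of V p) m) p'"
    "t \<in> topmost (left_of V p) m"
  shows "t \<in> V" "fst p' \<le> fst t" "fst t < fst p" "snd t < snd p"
proof -
  have t: "t \<in> left_of V p" using assms(3) by (simp add: topmost_def)
  then show "t \<in> V" "fst t < fst p" by (simp_all add: left_of_def)
  show "fst p' \<le> fst t" using assms(2,3) by (simp add: leftmost_in_def)
  show "snd t < snd p" using assms(1) t by blast
qed

lemma card_left_of_bottomless_ge:
  assumes "finite V" "inj_on snd V" "p \<in> V" "\<forall>q\<in>left_of V p. snd q < snd p"
    "leftmost_in (topmost (left_of V p) m) p'" "m \<le> card (left_of V p)"
  shows "m + 1 \<le> card (V \<inter> bottomless p p')"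
proof -
  let ?L = "left_of V p" and ?T = "topmost (left_of V p) m"
  note bounds = leftmost_topmost_left_of_bounds[OF assms(4,5)]
  have fin: "finite ?L" and inj: "inj_on snd ?L"
    using assms(1,2) by (auto simp: left_of_def intro: inj_on_subset)
  have "p' \<in> ?T" using assms(5) by (simp add: leftmost_in_def)
  have "insert p ?T \<subseteq> V \<inter> bottomless p p'"
  proof
    fix q assume "q \<in> insert p ?T"
    then show "q \<in> V \<inter> bottomless p p'"
    proof
      assume "q = p"
      then show ?thesis using assms(3) bounds(3)[OF \<open>p' \<in> ?T\<close>] by (simp add: bottomless_def)
    next
      assume qT: "q \<in> ?T"
      show ?thesis using bounds[OF qT] by (simp add: bottomless_def)
    qed
  qed
  moreover have "card (insert p ?T) = m + 1"
  proof -
    have "finite ?T" "p \<notin> ?T" using fin bounds(3) by (simp add: topmost_def, blast)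
    then show ?thesis using card_topmost[OF fin inj assms(6)] by simp
  qed
  ultimately show ?thesis
    using assms(1) by (metis card_mono finite_Int)
qed

lemma card_left_of_rect_ge:
  assumes "finite V" "inj_on snd V" "p \<in> V" "\<forall>q\<in>left_of V p. snd q < snd p"
    "leftmost_in (topmost (left_of V p) m) p'" "m \<le> card (left_of V p)"
    "z \<in> V" "fst z < fst p'"
  shows "m + 2 \<le> card (V \<inter> rect p z)"
proof -
  let ?L = "left_of V p" and ?T = "topmost (left_of V p) m"
  note bounds = leftmost_topmost_left_of_bounds[OF assms(4,5)]
  have fin: "finite ?L" and inj: "inj_on snd ?L"
    using assms(1,2) by (auto simp: left_of_def intro: inj_on_subset)
  have "p' \<in> ?T" using assms(5) by (simp add: leftmost_in_def)
  then have zL: "z \<in> ?L"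
    using assms(7,8) bounds(3)[OF \<open>p' \<in> ?T\<close>] by (simp add: left_of_def)
  have z: "snd z < snd p" "fst z < fst p"
    using assms(4) zL by (blast, simp add: left_of_def)
  have zT: "z \<notin> ?T" using assms(5,8) by (auto simp: leftmost_in_def)
  have "insert p (insert z ?T) \<subseteq> V \<inter> rect p z"
  proof
    fix q assume "q \<in> insert p (insert z ?T)"
    then consider "q = p" | "q = z" | "q \<in> ?T" by blast
    then show "q \<in> V \<inter> rect p z"
    proof cases
      case 3
      have "snd z < snd q" using topmost_above[OF fin inj 3 zL zT] .
      then show ?thesis using bounds[OF 3] assms(8) by (simp add: rect_def)
    qed (use assms(3,7) z in \<open>simp_all add: rect_def\<close>)
  qed
  moreover have "card (insert p (insert z ?T)) = m + 2"
  proof -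
    have "finite ?T" "p \<notin> ?T" "p \<noteq> z"
      using fin bounds(3) z(2) by (simp add: topmost_def, blast, blast)
    then show ?thesis using card_topmost[OF fin inj assms(6)] zT by simp
  qed
  ultimately show ?thesis
    using assms(1) by (metis card_mono finite_Int)
qed

lemma staircase_Cons_leftmost_topmost:
  assumes "finite V" "inj_on snd V" "p \<in> V" "\<forall>q\<in>left_of V p. snd q < snd p"
    "leftmost_in (topmost (left_of V p) m) p'" "m \<le> card (left_of V p)"
    "xs \<noteq> []" "hd xs = p'" "set xs \<subseteq> left_of V p" "staircase V m xs"
  shows "staircase V m (p # xs)"
proof -
  have "strictly_sw p y" if "y \<in> set xs" for y
    using assms(4,9) that unfolding left_of_def by blast
  moreover have "m + 1 \<le> card (V \<inter> bottomless p (hd xs))"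
    using card_left_of_bottomless_ge[OF assms(1-6)] assms(8) by simp
  moreover have "m + 2 \<le> card (V \<inter> rect p (xs ! 1))" if "2 \<le> length xs"
  proof -
    from that assms(7,8) obtain z t where xs_eq: "xs = p' # z # t"
      by (cases xs rule: remdups_adj.cases) auto
    then have "z \<in> V" "fst z < fst p'"
      using assms(9,10) by (auto simp: staircase_Cons left_of_def)
    then show ?thesis
      using card_left_of_rect_ge[OF assms(1-6)] xs_eq by simp
  qed
  ultimately show ?thesis
    using assms(10) by (simp add: staircase_Cons)
qed

lemma staircase_from_leftmost_topmost:
  assumes "finite V" "inj_on snd V"
    and "L \<subseteq> V" "\<forall>l\<in>L. \<forall>q\<in>V. fst q < fst l \<longrightarrow> q \<in> L" "leftmost_in (topmost L m) p"
  shows "\<exists>xs. xs \<noteq> [] \<and> hd xs = p \<and> set xs \<subseteq> L \<and> staircase V m xs \<and>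
    (\<forall>e\<in>nw_hyperedges V m. e \<subseteq> L \<longrightarrow> e \<inter> set xs \<noteq> {})"
  using assms(3-5)
proof (induction "card L" arbitrary: L p rule: less_induct)
  case less
  let ?L' = "left_of V p"
  have finL: "finite L" and injL: "inj_on snd L"
    using less.prems(1) assms(1,2) finite_subset inj_on_subset by blast+
  have pT: "p \<in> topmost L m" using less.prems(3) by (simp add: leftmost_in_def)
  then have pL: "p \<in> L" and "0 < m" by (auto simp: topmost_def)
  have L'L: "?L' \<subseteq> L" using less.prems(2) pL unfolding left_of_def by blast
  have below: "\<forall>q\<in>?L'. snd q < snd p"
    using below_leftmost_topmost[OF finL injL less.prems(3)] L'L by (auto simp: left_of_def)
  have hit: "p \<in> e \<or> e \<subseteq> ?L'" if "e \<in> nw_hyperedges V m" "e \<subseteq> L" for e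
    using nw_hyperedge_hit_or_left[OF assms(1) less.prems(1) pT that] that less.prems(1)
    by (auto simp: left_of_def)
  show ?case
  proof (cases "card ?L' < m")
    case True
    have "\<not> e \<subseteq> ?L'" if "e \<in> nw_hyperedges V m" for e
      using that True card_mono[OF finite_subset[OF L'L finL], of e]
      by (auto simp: nw_hyperedges_def)
    then show ?thesis using hit pL by (intro exI[of _ "[p]"]) (simp add: staircase_Cons)
  next
    case False
    have finL': "finite ?L'" and injL': "inj_on snd ?L'"
      using L'L finL injL finite_subset inj_on_subset by blast+
    obtain p' where p': "leftmost_in (topmost ?L' m) p'"
      using ex_leftmost_topmost[OF finL' injL' \<open>0 < m\<close>] False by auto
    have smaller: "card ?L' < card L"
      using L'L pL finL by (intro psubset_card_mono) (auto simp: left_of_def)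
    have L'V: "?L' \<subseteq> V" by (simp add: left_of_def)
    have L'_closed: "\<forall>l\<in>?L'. \<forall>q\<in>V. fst q < fst l \<longrightarrow> q \<in> ?L'"
      by (auto simp: left_of_def)
    obtain xs where xs: "xs \<noteq> []" "hd xs = p'" "set xs \<subseteq> ?L'" "staircase V m xs"
      and hit': "\<forall>e\<in>nw_hyperedges V m. e \<subseteq> ?L' \<longrightarrow> e \<inter> set xs \<noteq> {}"
      using less.hyps[OF smaller L'V L'_closed p'] by blast
    have "p \<in> V" using pL less.prems(1) by blast
    then have "staircase V m (p # xs)"
      using staircase_Cons_leftmost_topmost[OF assms(1,2) _ below p' _ xs] False by simp
    moreover have "set (p # xs) \<subseteq> L" using pL xs(3) L'L by auto
    moreover have "e \<inter> set (p # xs) \<noteq> {}" if "e \<in> nw_hyperedges V m" "e \<subseteq> L" for e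
      using hit[OF that] hit' that(1) by auto
    ultimately show ?thesis using xs(2) by (intro exI[of _ "p # xs"]) simp
  qed
qed

theorem lemma14:
  fixes V :: "pt set" and m :: nat
  assumes "finite V" and "general_position V" and "0 < m" and "m \<le> card V"
  shows "\<exists>xs :: pt list.
     shallow_hitting_set 2 V (nw_hyperedges V m) (set xs) \<and>
     sorted_wrt (\<lambda>p q. fst q < fst p \<and> snd q < snd p) xs \<and>
     xs \<noteq> [] \<and>
     hd xs \<in> topmost V m \<and> (\<forall>q\<in>topmost V m. fst (hd xs) \<le> fst q) \<and>
     card (topmost V m \<inter> set xs) = 1 \<and>
     (\<forall>j. j + 1 < length xs \<longrightarrow> card (V \<inter> bottomless (xs ! j) (xs ! (j + 1))) \<ge> m + 1) \<and>
     (\<forall>j. j + 2 < length xs \<longrightarrow> card (V \<inter> rect (xs ! j) (xs ! (j + 2))) \<ge> m + 2)"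
proof -
  have inj: "inj_on snd V" using assms(2) by (simp add: general_position_def)
  obtain x1 where x1: "leftmost_in (topmost V m) x1"
    using ex_leftmost_topmost[OF assms(1) inj assms(3,4)] by blast
  obtain xs where xs: "xs \<noteq> []" "hd xs = x1" "set xs \<subseteq> V" "staircase V m xs"
    and hits_V: "\<forall>e\<in>nw_hyperedges V m. e \<subseteq> V \<longrightarrow> e \<inter> set xs \<noteq> {}"
    using staircase_from_leftmost_topmost[OF assms(1) inj order_refl _ x1] by blast
  have hits: "\<forall>e\<in>nw_hyperedges V m. e \<inter> set xs \<noteq> {}"
    using hits_V by (auto simp: nw_hyperedges_def)
  obtain t where xs_eq: "xs = x1 # t" using xs(1,2) by (cases xs) auto
  have "y \<notin> topmost V m" if "y \<in> set t" for y
  proof -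
    have "fst y < fst x1" using xs(4) that by (simp add: xs_eq staircase_Cons)
    then show ?thesis using x1 unfolding leftmost_in_def by (meson not_le)
  qed
  then have "topmost V m \<inter> set xs = {x1}"
    using x1 unfolding xs_eq leftmost_in_def by auto
  then have "card (topmost V m \<inter> set xs) = 1" by simp
  moreover have "shallow_hitting_set 2 V (nw_hyperedges V m) (set xs)"
    using staircase_shallow_hitting_set[OF assms(1) xs(3,4) hits] .
  moreover have "hd xs \<in> topmost V m" "\<forall>q\<in>topmost V m. fst (hd xs) \<le> fst q"
    using x1 xs(2) by (simp_all add: leftmost_in_def)
  ultimately show ?thesis
    using xs(1) xs(4)[unfolded staircase_def] by (intro exI[of _ xs]) simp
qed

end
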